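(* Let $d$ be a symmetric nonnegative function on a set $\mathcal X$ with $d(x,z)\le M(d(x,y)+d(y,z))$ for all $x,y,z$. Let $\mathcal S\subset\mathcal X$ be finite and $\mathcal C_{\mathrm{OPT}}$ a set of $K$ centers minimizing $\sum_{x\in\mathcal S}\min_{c}d(x,c)^2$; its clusters are the classes of points of $\mathcal S$ with the same nearest optimal center. For a center set $\mathcal C$ and $Y\subseteq\mathcal S$ write $\Upsilon(Y)=\sum_{y\in Y}\min_{c\in\mathcal C}d(y,c)^2$ and $\Upsilon_{\mathrm{OPT}}(Y)=\sum_{y\in Y}\min_{c\in\mathcal C_{\mathrm{OPT}}}d(y,c)^2$. Let $\mathcal C$ be the current center set and $\Upsilon:=\Upsilon(\mathcal S)$. Choose $u>0$ uncovered clusters (clusters containing no point of $\mathcal C$), let $\mathcal S_u$ be the set of points in these clusters and $\mathcal S_c=\mathcal S\setminus\mathcal S_u$. Suppose $t\le u$ random centers are added to $\mathcal C$ one at a time, each chosen from $\mathcal S$ with probability proportional to $D(x)^2$, $D(x)$ being the distance from $x$ to the nearest current center. Let $\Upsilon'$ be the potential $\Upsilon(\mathcal S)$ for the new center set. Then $$\mathbb E[\Upsilon']\le\big(\Upsilon(\mathcal S_c)+16M^4\Upsilon_{\mathrm{OPT}}(\mathcal S_u)\big)(1+H_t)+\frac{u-t}{u}\Upsilon(\mathcal S_u),$$ where $H_t=1+\frac12+\dots+\frac1t$ (and $H_0=0$), and $\Upsilon(\mathcal S_c),\Upsilon(\mathcal S_u)$ refer to the current center set $\mathcal C$. *)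

theory Defs
  imports "HOL-Probability.Probability"
begin

definition distC :: "('a \<Rightarrow> 'a \<Rightarrow> real) \<Rightarrow> 'a set \<Rightarrow> 'a \<Rightarrow> real" where
  "distC d C x = Min ((\<lambda>c. d x c) ` C)"

definition cost :: "('a \<Rightarrow> 'a \<Rightarrow> real) \<Rightarrow> 'a set \<Rightarrow> 'a set \<Rightarrow> real" where
  "cost d C Y = (\<Sum>y\<in>Y. (distC d C y)^2)"

text \<open>Clusters of S w.r.t. the optimal centers Copt and a nearest-center assignment a:
  the (nonempty) classes of points of S with the same assigned optimal center.\<close>
definition clusters :: "'a set \<Rightarrow> 'a set \<Rightarrow> ('a \<Rightarrow> 'a) \<Rightarrow> 'a set set" where
  "clusters S Copt a = {A. (\<exists>c\<in>Copt. A = {x\<in>S. a x = c}) \<and> A \<noteq> {}}"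

definition sample_pmf :: "('a \<Rightarrow> 'a \<Rightarrow> real) \<Rightarrow> 'a set \<Rightarrow> 'a set \<Rightarrow> 'a pmf" where
  "sample_pmf d S C =
     embed_pmf (\<lambda>x. if x \<in> S then (distC d C x)^2 / cost d C S else 0)"

text \<open>If the current potential is 0 the sampling distribution is undefined; we then stop adding
  (the potential is 0 and stays 0 anyway).\<close>
fun kpp_pmf :: "('a \<Rightarrow> 'a \<Rightarrow> real) \<Rightarrow> 'a set \<Rightarrow> nat \<Rightarrow> 'a set \<Rightarrow> 'a set pmf" where
  "kpp_pmf d S 0 C = return_pmf C"
| "kpp_pmf d S (Suc t) C =
     (if cost d C S = 0 then return_pmf C
      else bind_pmf (sample_pmf d S C) (\<lambda>x. kpp_pmf d S t (insert x C)))"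

end

theory Submission imports Defs begin

text \<open>
  Induction on \<open>t\<close>, generalised over the current centers and the family of clusters.
  A point sampled outside the clusters of the family (probability \<open>\<Upsilon>(S\<^sub>c)/\<Upsilon>\<close>)
  only lowers the potential, and the induction hypothesis applies to the same family.
  A point sampled in a cluster \<open>A\<close> (probability \<open>\<Upsilon>(A)/\<Upsilon>\<close>) removes \<open>A\<close> from the
  family; averaged over the point chosen inside \<open>A\<close>, the new potential of \<open>A\<close> is at most
  \<open>16 M\<^sup>4 \<Upsilon>\<^sub>O\<^sub>P\<^sub>T(A)\<close>, since the approximate triangle inequality is used twice and each use
  costs a factor \<open>2 M\<^sup>2\<close> on squared distances. Summing over the clusters with Cauchy-Schwarz,
  \<open>\<Sum>\<Upsilon>(A)\<^sup>2 \<ge> \<Upsilon>(S\<^sub>u)\<^sup>2/u\<close>, yields the coefficient \<open>(u - t - 1)/u\<close> up to an error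
  \<open>\<Upsilon>(S\<^sub>c) \<Upsilon>(S\<^sub>u)/(u \<Upsilon>) \<le> \<Upsilon>(S\<^sub>c)/(t + 1)\<close>, which the new harmonic term pays for.
\<close>

lemma distC_le: "finite C \<Longrightarrow> c \<in> C \<Longrightarrow> distC d C x \<le> d x c"
  unfolding distC_def by (intro Min_le) auto

lemma distC_attained:
  assumes "finite C" "C \<noteq> {}"
  shows "\<exists>c\<in>C. distC d C x = d x c"
proof -
  have "Min ((\<lambda>c. d x c) ` C) \<in> (\<lambda>c. d x c) ` C"
    using assms by (intro Min_in) auto
  then show ?thesis
    unfolding distC_def by auto
qed

lemma distC_insert:
  "finite C \<Longrightarrow> C \<noteq> {} \<Longrightarrow> distC d (insert y C) x = min (d x y) (distC d C x)"
  unfolding distC_def by (simp add: Min_insert)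

lemma cost_nonneg: "0 \<le> cost d C Y"
  unfolding cost_def by (intro sum_nonneg) auto

lemma cost_Un_disjoint:
  "finite A \<Longrightarrow> finite B \<Longrightarrow> A \<inter> B = {} \<Longrightarrow> cost d C (A \<union> B) = cost d C A + cost d C B"
  unfolding cost_def by (rule sum.union_disjoint)

lemma cost_Diff:
  "finite B \<Longrightarrow> A \<subseteq> B \<Longrightarrow> cost d C (B - A) = cost d C B - cost d C A"
  unfolding cost_def by (rule sum_diff)

lemma pmf_sample_pmf:
  assumes "finite S" "cost d C S \<noteq> 0"
  shows "pmf (sample_pmf d S C) x = (if x \<in> S then (distC d C x)^2 / cost d C S else 0)"
proof -
  let ?f = "\<lambda>x. if x \<in> S then (distC d C x)^2 / cost d C S else 0"
  have nonneg: "0 \<le> ?f x" for x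
    using cost_nonneg[of d C S] by auto
  have "(\<integral>\<^sup>+x. ennreal (?f x) \<partial>count_space UNIV) = ennreal (\<Sum>x\<in>S. ?f x)"
    using assms(1) nonneg by (subst nn_integral_count_space') (auto intro: sum_ennreal)
  also have "(\<Sum>x\<in>S. ?f x) = 1"
    using assms(2) by (simp add: cost_def flip: sum_divide_distrib)
  finally show ?thesis
    unfolding sample_pmf_def using nonneg by (subst pmf_embed_pmf) auto
qed

lemma set_pmf_sample_pmf: "finite S \<Longrightarrow> cost d C S \<noteq> 0 \<Longrightarrow> set_pmf (sample_pmf d S C) \<subseteq> S"
  by (auto simp: set_pmf_eq pmf_sample_pmf)

lemma set_pmf_kpp_pmf: "finite S \<Longrightarrow> set_pmf (kpp_pmf d S t C) \<subseteq> Pow (C \<union> S)"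
proof (induction t arbitrary: C)
  case (Suc t)
  show ?case
  proof (cases "cost d C S = 0")
    case False
    have "set_pmf (kpp_pmf d S t (insert x C)) \<subseteq> Pow (C \<union> S)" if "x \<in> S" for x
      using Suc that by auto
    then show ?thesis
      using False set_pmf_sample_pmf[OF Suc.prems False] by auto
  qed simp
qed simp

lemma finite_set_pmf_kpp_pmf: "finite S \<Longrightarrow> finite C \<Longrightarrow> finite (set_pmf (kpp_pmf d S t C))"
  using set_pmf_kpp_pmf by (metis finite_Pow_iff finite_UnI finite_subset)

lemma expectation_kpp_pmf_Suc:
  assumes "finite S" "finite C" "cost d C S \<noteq> 0"
  shows "measure_pmf.expectation (kpp_pmf d S (Suc t) C) f =
    (\<Sum>x\<in>S. (distC d C x)^2 * measure_pmf.expectation (kpp_pmf d S t (insert x C)) f) / cost d C S"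
proof -
  have "measure_pmf.expectation (kpp_pmf d S (Suc t) C) f =
      (\<Sum>x\<in>S. pmf (sample_pmf d S C) x * measure_pmf.expectation (kpp_pmf d S t (insert x C)) f)"
    using assms set_pmf_sample_pmf[OF assms(1,3)]
    by (simp, subst pmf_expectation_bind[of S]) (auto intro: finite_set_pmf_kpp_pmf)
  then show ?thesis
    using assms by (simp add: pmf_sample_pmf sum_divide_distrib)
qed

lemma power2_le_twice_sum_squares:
  fixes x M p q :: real
  assumes "0 \<le> x" "x \<le> M * (p + q)" "0 \<le> p" "0 \<le> q"
  shows "x^2 \<le> 2 * M^2 * (p^2 + q^2)"
proof -
  have "x^2 \<le> M^2 * (p + q)^2"
    using assms by (metis power_mono power_mult_distrib)
  also have "\<dots> \<le> M^2 * (2 * (p^2 + q^2))"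
    using zero_le_power2[of "p - q"]
    by (intro mult_left_mono) (simp_all add: power2_eq_square algebra_simps)
  finally show ?thesis
    by (simp add: algebra_simps)
qed

locale approx_metric =
  fixes d :: "'a \<Rightarrow> 'a \<Rightarrow> real" and M :: real
  assumes d_sym: "d x y = d y x"
    and d_nonneg: "0 \<le> d x y"
    and d_approx_triangle: "d x z \<le> M * (d x y + d y z)"
begin

lemma approx_triangle_sq: "(d x z)^2 \<le> 2 * M^2 * ((d x y)^2 + (d y z)^2)"
  using d_approx_triangle d_nonneg by (intro power2_le_twice_sum_squares)

lemma distC_nonneg: "finite C \<Longrightarrow> C \<noteq> {} \<Longrightarrow> 0 \<le> distC d C x"
  using distC_attained d_nonneg by metis

lemma distC_sq_le:
  assumes "finite C" "C \<noteq> {}"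
  shows "(distC d C x)^2 \<le> 2 * M^2 * ((d x y)^2 + (distC d C y)^2)"
proof -
  obtain c where "c \<in> C" "distC d C y = d y c"
    using distC_attained[OF assms] by blast
  then have "distC d C x \<le> M * (d x y + distC d C y)"
    using distC_le[OF assms(1)] d_approx_triangle order_trans by metis
  then show ?thesis
    using distC_nonneg[OF assms] d_nonneg by (intro power2_le_twice_sum_squares)
qed

lemma cost_insert_le: "finite C \<Longrightarrow> C \<noteq> {} \<Longrightarrow> cost d (insert z C) Y \<le> cost d C Y"
  unfolding cost_def by (intro sum_mono power_mono) (auto simp: distC_insert distC_nonneg d_nonneg)

lemma cost_insert_le_sum: "finite C \<Longrightarrow> C \<noteq> {} \<Longrightarrow> cost d (insert z C) Y \<le> (\<Sum>y\<in>Y. (d y z)^2)"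
  unfolding cost_def
  by (intro sum_mono power_mono) (simp_all add: distC_insert distC_nonneg d_nonneg)

text \<open>
  Divided by \<open>cost d C A\<close>, the left-hand side is the expected cost of \<open>A\<close> after adding a point
  of \<open>A\<close> chosen by \<open>D\<^sup>2\<close> sampling restricted to \<open>A\<close>.
\<close>
lemma cluster_sampling_cost_le:
  assumes "finite A" "finite C" "C \<noteq> {}"
  shows "(\<Sum>z\<in>A. (distC d C z)^2 * cost d (insert z C) A)
    \<le> 16 * M^4 * (\<Sum>x\<in>A. (d x c)^2) * cost d C A"
proof (cases "A = {}")
  case False
  let ?n = "real (card A)" and ?\<phi> = "cost d C A"
  let ?s = "\<lambda>z. \<Sum>x\<in>A. (d x z)^2"
  have n_distC: "?n * (distC d C z)^2 \<le> 2 * M^2 * (?s z + ?\<phi>)" for z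
  proof -
    have "?n * (distC d C z)^2 = (\<Sum>x\<in>A. (distC d C z)^2)"
      by simp
    also have "\<dots> \<le> (\<Sum>x\<in>A. 2 * M^2 * ((d z x)^2 + (distC d C x)^2))"
      by (intro sum_mono distC_sq_le assms)
    also have "\<dots> = 2 * M^2 * (?s z + ?\<phi>)"
      by (simp add: cost_def d_sym sum.distrib flip: sum_distrib_left)
    finally show ?thesis .
  qed
  have n_summand: "?n * ((distC d C z)^2 * cost d (insert z C) A) \<le> 4 * M^2 * ?\<phi> * ?s z" for z
  proof -
    have "?n * ((distC d C z)^2 * cost d (insert z C) A)
        \<le> 2 * M^2 * (?s z + ?\<phi>) * cost d (insert z C) A"
      using mult_right_mono[OF n_distC cost_nonneg] by (simp add: mult.assoc)
    also have "\<dots> \<le> 2 * M^2 * (?s z * ?\<phi> + ?\<phi> * ?s z)"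
    proof -
      have "(?s z + ?\<phi>) * cost d (insert z C) A \<le> ?s z * ?\<phi> + ?\<phi> * ?s z"
        using cost_insert_le[OF assms(2,3)] cost_insert_le_sum[OF assms(2,3)] cost_nonneg[of d C A]
          sum_nonneg[of A "\<lambda>x. (d x z)^2"]
        unfolding distrib_right by (intro add_mono mult_left_mono) auto
      from mult_left_mono[OF this, of "2 * M^2"] show ?thesis
        by (simp only: mult.assoc) simp
    qed
    finally show ?thesis
      by (simp add: algebra_simps)
  qed
  have sum_s: "(\<Sum>z\<in>A. ?s z) \<le> 4 * M^2 * ?n * (\<Sum>x\<in>A. (d x c)^2)"
  proof -
    have "(\<Sum>z\<in>A. ?s z) \<le> (\<Sum>z\<in>A. \<Sum>x\<in>A. 2 * M^2 * ((d x c)^2 + (d c z)^2))"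
      by (intro sum_mono approx_triangle_sq)
    also have "\<dots> = 4 * M^2 * ?n * (\<Sum>x\<in>A. (d x c)^2)"
      by (simp add: d_sym sum.distrib algebra_simps flip: sum_distrib_left sum_distrib_right)
    finally show ?thesis .
  qed
  have "?n * (\<Sum>z\<in>A. (distC d C z)^2 * cost d (insert z C) A)
      = (\<Sum>z\<in>A. ?n * ((distC d C z)^2 * cost d (insert z C) A))"
    by (rule sum_distrib_left)
  also have "\<dots> \<le> (\<Sum>z\<in>A. 4 * M^2 * ?\<phi> * ?s z)"
    by (intro sum_mono n_summand)
  also have "\<dots> \<le> 4 * M^2 * ?\<phi> * (4 * M^2 * ?n * (\<Sum>x\<in>A. (d x c)^2))"
    unfolding sum_distrib_left[symmetric] using sum_s cost_nonneg[of d C A]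
    by (intro mult_left_mono) auto
  also have "\<dots> = ?n * (16 * M^4 * (\<Sum>x\<in>A. (d x c)^2) * ?\<phi>)"
    by (simp add: algebra_simps power4_eq_xxxx power2_eq_square)
  finally show ?thesis
    using False assms(1) by (simp add: mult_le_cancel_left_pos card_gt_0_iff)
qed (simp add: cost_def)

end

lemma harmonic_step_le:
  fixes p q b h u t :: real
  assumes "0 \<le> p" "0 \<le> q" "p \<le> b" "0 \<le> t" "t + 1 \<le> u"
  shows "p * (b * h + (u - t) / u * q) + q * (b * h + (u - 1 - t) / u * q)
    \<le> (p + q) * (b * (h + 1 / (t + 1)) + (u - 1 - t) / u * q)"
proof -
  have "p * q / u \<le> p * (p + q) / (t + 1)"
    using assms by (intro frac_le mult_left_mono) auto
  also have "\<dots> \<le> (p + q) * b / (t + 1)"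
    using assms by (intro divide_right_mono) (auto simp: mult.commute intro: mult_right_mono)
  finally have "p * q / u \<le> (p + q) * b / (t + 1)" .
  moreover have "p * (b * h + (u - t) / u * q) + q * (b * h + (u - 1 - t) / u * q)
      = (p + q) * (b * h + (u - 1 - t) / u * q) + p * q / u"
    using assms by (simp add: field_simps)
  ultimately show ?thesis
    by (simp add: algebra_simps add_divide_distrib)
qed

locale kmeanspp = approx_metric d M for d :: "'a \<Rightarrow> 'a \<Rightarrow> real" and M +
  fixes S Copt :: "'a set"
  assumes finite_S: "finite S"
begin

definition opt_cluster_family :: "'a set set \<Rightarrow> bool" where
  "opt_cluster_family U \<longleftrightarrow>
     disjoint U \<and> \<Union>U \<subseteq> S \<and> (\<forall>A\<in>U. \<exists>c. \<forall>x\<in>A. d x c = distC d Copt x)"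

definition kpp_bound :: "'a set \<Rightarrow> 'a set set \<Rightarrow> nat \<Rightarrow> real" where
  "kpp_bound C U t =
     (cost d C (S - \<Union>U) + 16 * M^4 * cost d Copt (\<Union>U)) * (1 + harm t)
     + real (card U - t) / real (card U) * cost d C (\<Union>U)"

lemma opt_cluster_family_finite:
  assumes "opt_cluster_family U"
  shows "finite U" "finite (\<Union>U)" "A \<in> U \<Longrightarrow> finite A"
  using assms finite_S unfolding opt_cluster_family_def
  by (auto intro: finite_subset finite_UnionD)

lemma opt_cluster_family_Diff: "opt_cluster_family U \<Longrightarrow> opt_cluster_family (U - {A})"
  unfolding opt_cluster_family_def by (auto intro: pairwise_subset)

lemma opt_cluster_family_clusters:
  assumes assign: "\<forall>x\<in>S. d x (a x) = distC d Copt x" and U: "U \<subseteq> clusters S Copt a"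
  shows "opt_cluster_family U"
proof -
  have cluster: "\<exists>c. A = {x\<in>S. a x = c}" if "A \<in> U" for A
    using U that unfolding clusters_def by blast
  have "disjoint U"
  proof (rule pairwiseI)
    fix A B assume "A \<in> U" "B \<in> U" "A \<noteq> B"
    then obtain c c' where "A = {x\<in>S. a x = c}" "B = {x\<in>S. a x = c'}"
      using cluster by blast
    then show "disjnt A B"
      using \<open>A \<noteq> B\<close> by (auto simp: disjnt_def)
  qed
  moreover have "\<Union>U \<subseteq> S"
    using cluster by (intro Union_least) blast
  moreover have "\<exists>c. \<forall>x\<in>A. d x c = distC d Copt x" if A: "A \<in> U" for A
  proof -
    obtain c where "A = {x\<in>S. a x = c}"
      using cluster[OF A] by blast
    then show ?thesis
      using assign by (intro exI[of _ c]) auto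
  qed
  ultimately show ?thesis
    unfolding opt_cluster_family_def by blast
qed

lemma cost_split:
  "opt_cluster_family U \<Longrightarrow> cost d C S = cost d C (S - \<Union>U) + cost d C (\<Union>U)"
  using cost_Diff[OF finite_S] unfolding opt_cluster_family_def by simp

lemma sum_Union_opt_cluster_family:
  assumes "opt_cluster_family U"
  shows "(\<Sum>x\<in>\<Union>U. g x) = (\<Sum>A\<in>U. \<Sum>x\<in>A. g x)"
  using sum.Union_disjoint_sets[of U g] opt_cluster_family_finite(3)[OF assms] assms
  by (simp add: opt_cluster_family_def o_def)

lemma cost_Union: "opt_cluster_family U \<Longrightarrow> cost d C (\<Union>U) = (\<Sum>A\<in>U. cost d C A)"
  unfolding cost_def by (rule sum_Union_opt_cluster_family)

lemma kpp_bound_nonneg: "0 \<le> kpp_bound C U t"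
  unfolding kpp_bound_def
  by (intro add_nonneg_nonneg mult_nonneg_nonneg cost_nonneg) (simp_all add: harm_nonneg)

lemma cost_le_kpp_bound_0: "opt_cluster_family U \<Longrightarrow> cost d C S \<le> kpp_bound C U 0"
  using cost_split[of U C] cost_nonneg[of d Copt "\<Union>U"] opt_cluster_family_finite(1)[of U]
  by (cases "U = {}") (simp_all add: kpp_bound_def harm_def)

lemma kpp_bound_insert_le:
  "finite C \<Longrightarrow> C \<noteq> {} \<Longrightarrow> kpp_bound (insert x C) U t \<le> kpp_bound C U t"
  unfolding kpp_bound_def
  by (intro add_mono mult_right_mono mult_left_mono cost_insert_le)
    (simp_all add: harm_nonneg)

lemma kpp_bound_remove_cluster:
  assumes U: "opt_cluster_family U" and A: "A \<in> U" and C: "finite C" "C \<noteq> {}"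
  shows "kpp_bound (insert x C) (U - {A}) t
    \<le> (cost d C (S - \<Union>U) + cost d (insert x C) A + 16 * M^4 * cost d Copt (\<Union>U - A))
        * (1 + harm t)
      + real (card U - 1 - t) / real (card U - 1) * cost d C (\<Union>U - A)"
proof -
  have A_sub: "A \<subseteq> S"
    using U A unfolding opt_cluster_family_def by blast
  have Union_Diff: "\<Union>(U - {A}) = \<Union>U - A"
  proof
    show "\<Union>(U - {A}) \<subseteq> \<Union>U - A"
    proof
      fix x assume "x \<in> \<Union>(U - {A})"
      then obtain B where B: "B \<in> U" "B \<noteq> A" "x \<in> B"
        by blast
      then have "disjnt B A"
        using U A unfolding opt_cluster_family_def by (meson pairwiseD)
      then show "x \<in> \<Union>U - A"
        using B by (auto simp: disjnt_iff)
    qed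
  qed auto
  have covered_Diff: "S - \<Union>(U - {A}) = (S - \<Union>U) \<union> A"
    unfolding Union_Diff using A_sub by auto
  have covered: "cost d C' (S - \<Union>(U - {A})) = cost d C' (S - \<Union>U) + cost d C' A" for C'
    unfolding covered_Diff using opt_cluster_family_finite(3)[OF U A] finite_S A
    by (intro cost_Un_disjoint) auto
  have card_Diff: "card (U - {A}) = card U - 1"
    using A by simp
  have "(cost d (insert x C) (S - \<Union>U) + cost d (insert x C) A + 16 * M^4 * cost d Copt (\<Union>U - A))
        * (1 + harm t)
      \<le> (cost d C (S - \<Union>U) + cost d (insert x C) A + 16 * M^4 * cost d Copt (\<Union>U - A))
        * (1 + harm t)"
    using cost_insert_le[OF C] by (intro mult_right_mono) (simp_all add: harm_nonneg add_nonneg_nonneg)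
  moreover have "real (card U - 1 - t) / real (card U - 1) * cost d (insert x C) (\<Union>U - A)
      \<le> real (card U - 1 - t) / real (card U - 1) * cost d C (\<Union>U - A)"
    using cost_insert_le[OF C] by (intro mult_left_mono) simp_all
  ultimately show ?thesis
    unfolding kpp_bound_def covered unfolding Union_Diff card_Diff by (rule add_mono)
qed

lemma cluster_sum_le:
  assumes U: "opt_cluster_family U" and A: "A \<in> U" and C: "finite C" "C \<noteq> {}"
    and F: "\<And>x. x \<in> A \<Longrightarrow> F x \<le> kpp_bound (insert x C) (U - {A}) t"
  shows "(\<Sum>x\<in>A. (distC d C x)^2 * F x)
    \<le> cost d C A * ((cost d C (S - \<Union>U) + 16 * M^4 * cost d Copt (\<Union>U)) * (1 + harm t)
        + real (card U - 1 - t) / real (card U - 1) * cost d C (\<Union>U - A))"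
proof -
  obtain c where c: "\<forall>x\<in>A. d x c = distC d Copt x"
    using U A unfolding opt_cluster_family_def by blast
  have opt_A: "cost d Copt A = (\<Sum>x\<in>A. (d x c)^2)"
    unfolding cost_def using c by simp
  have opt_split: "cost d Copt (\<Union>U) = cost d Copt (\<Union>U - A) + cost d Copt A"
    using cost_Diff[OF opt_cluster_family_finite(2)[OF U] Union_upper[OF A]] by simp
  define h :: real where "h = 1 + harm t"
  define b where "b = cost d C (S - \<Union>U) + 16 * M^4 * cost d Copt (\<Union>U - A)"
  define r where "r = real (card U - 1 - t) / real (card U - 1) * cost d C (\<Union>U - A)"
  have "(\<Sum>x\<in>A. (distC d C x)^2 * F x)
      \<le> (\<Sum>x\<in>A. (distC d C x)^2 * (b * h + r) + h * ((distC d C x)^2 * cost d (insert x C) A))"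
  proof (rule sum_mono)
    fix x assume "x \<in> A"
    have "F x \<le> b * h + r + h * cost d (insert x C) A"
      using F[OF \<open>x \<in> A\<close>] kpp_bound_remove_cluster[OF U A C, of x t]
      unfolding b_def h_def r_def by (simp add: algebra_simps)
    then have "(distC d C x)^2 * F x \<le> (distC d C x)^2 * (b * h + r + h * cost d (insert x C) A)"
      by (rule mult_left_mono) simp
    then show "(distC d C x)^2 * F x
        \<le> (distC d C x)^2 * (b * h + r) + h * ((distC d C x)^2 * cost d (insert x C) A)"
      by (simp add: algebra_simps)
  qed
  also have "\<dots> = cost d C A * (b * h + r)
      + h * (\<Sum>x\<in>A. (distC d C x)^2 * cost d (insert x C) A)"
    by (simp add: cost_def sum.distrib sum_distrib_left sum_distrib_right)
  also have "\<dots> \<le> cost d C A * (b * h + r) + h * (16 * M^4 * cost d Copt A * cost d C A)"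
    unfolding opt_A h_def
    by (intro add_left_mono mult_left_mono cluster_sampling_cost_le opt_cluster_family_finite(3)[OF U A] C)
      (simp_all add: harm_nonneg add_nonneg_nonneg)
  also have "\<dots> = cost d C A * ((cost d C (S - \<Union>U) + 16 * M^4 * cost d Copt (\<Union>U)) * h + r)"
    unfolding b_def opt_split by (simp add: algebra_simps)
  finally show ?thesis
    unfolding h_def r_def .
qed

lemma uncovered_sum_le:
  assumes U: "opt_cluster_family U" and C: "finite C" "C \<noteq> {}" and t: "t < card U"
    and F: "\<And>A x. A \<in> U \<Longrightarrow> x \<in> A \<Longrightarrow> F x \<le> kpp_bound (insert x C) (U - {A}) t"
  shows "(\<Sum>x\<in>\<Union>U. (distC d C x)^2 * F x)
    \<le> cost d C (\<Union>U) * ((cost d C (S - \<Union>U) + 16 * M^4 * cost d Copt (\<Union>U)) * (1 + harm t)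
        + (real (card U) - 1 - real t) / real (card U) * cost d C (\<Union>U))"
proof -
  define a where "a = (cost d C (S - \<Union>U) + 16 * M^4 * cost d Copt (\<Union>U)) * (1 + harm t)"
  define \<beta> where "\<beta> = real (card U - 1 - t) / real (card U - 1)"
  define u where "u = real (card U)"
  define p where "p = cost d C (\<Union>U)"
  define Q where "Q = (\<Sum>A\<in>U. (cost d C A)^2)"
  have p_sum: "p = (\<Sum>A\<in>U. cost d C A)"
    unfolding p_def by (rule cost_Union[OF U])
  have "(\<Sum>x\<in>\<Union>U. (distC d C x)^2 * F x) = (\<Sum>A\<in>U. \<Sum>x\<in>A. (distC d C x)^2 * F x)"
    by (rule sum_Union_opt_cluster_family[OF U])
  also have "\<dots> \<le> (\<Sum>A\<in>U. cost d C A * (a + \<beta> * (p - cost d C A)))"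
  proof (rule sum_mono)
    fix A assume A: "A \<in> U"
    have "cost d C (\<Union>U - A) = p - cost d C A"
      unfolding p_def using cost_Diff opt_cluster_family_finite(2)[OF U] A by blast
    then show "(\<Sum>x\<in>A. (distC d C x)^2 * F x) \<le> cost d C A * (a + \<beta> * (p - cost d C A))"
      using cluster_sum_le[OF U A C F[OF A]] unfolding a_def \<beta>_def by simp
  qed
  also have "\<dots> = a * (\<Sum>A\<in>U. cost d C A) + \<beta> * p * (\<Sum>A\<in>U. cost d C A) - \<beta> * Q"
    unfolding Q_def
    by (simp add: algebra_simps power2_eq_square sum_distrib_left sum_subtractf sum.distrib)
  also have "\<dots> = p * a + \<beta> * (p^2 - Q)"
    unfolding p_sum[symmetric] by (simp add: algebra_simps power2_eq_square)
  also have "\<dots> \<le> p * a + (u - 1 - t) / u * p^2"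
  proof -
    have u_pos: "0 < u" and \<beta>: "0 \<le> \<beta>" "\<beta> * (u - 1) = u - 1 - t"
      using t by (auto simp: u_def \<beta>_def of_nat_diff)
    have "p^2 \<le> u * Q"
      unfolding p_sum Q_def u_def using sum_squared_le_sum_of_squares by (simp add: mult.commute)
    then have "\<beta> * (p^2 - Q) \<le> \<beta> * (p^2 - p^2 / u)"
      using u_pos \<beta> by (intro mult_left_mono) (auto simp: field_simps)
    also have "\<dots> = \<beta> * (u - 1) / u * p^2"
      using u_pos by (simp add: field_simps)
    also have "\<dots> = (u - 1 - t) / u * p^2"
      using \<beta>(2) by simp
    finally show ?thesis
      by simp
  qed
  finally show ?thesis
    unfolding a_def u_def p_def by (simp add: power2_eq_square algebra_simps)
qed

lemma kpp_step_sum_le: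
  assumes U: "opt_cluster_family U" and C: "finite C" "C \<noteq> {}" and t: "t < card U"
    and covered: "\<And>x. x \<in> S - \<Union>U \<Longrightarrow> F x \<le> kpp_bound C U t"
    and uncovered: "\<And>A x. A \<in> U \<Longrightarrow> x \<in> A \<Longrightarrow> F x \<le> kpp_bound (insert x C) (U - {A}) t"
  shows "(\<Sum>x\<in>S. (distC d C x)^2 * F x) \<le> cost d C S * kpp_bound C U (Suc t)"
proof -
  define b where "b = cost d C (S - \<Union>U) + 16 * M^4 * cost d Copt (\<Union>U)"
  define h :: real where "h = 1 + harm t"
  define u where "u = real (card U)"
  define pc where "pc = cost d C (S - \<Union>U)"
  define pu where "pu = cost d C (\<Union>U)"
  have bound_t: "kpp_bound C U t = b * h + (u - t) / u * pu"
    using t unfolding kpp_bound_def b_def h_def u_def pu_def by (simp add: of_nat_diff)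
  have bound_Suc: "kpp_bound C U (Suc t) = b * (h + 1 / (real t + 1)) + (u - 1 - t) / u * pu"
    using t unfolding kpp_bound_def b_def h_def u_def pu_def
    by (simp add: of_nat_diff harm_Suc inverse_eq_divide algebra_simps)
  have "\<Union>U \<subseteq> S"
    using U unfolding opt_cluster_family_def by blast
  then have "(\<Sum>x\<in>S. (distC d C x)^2 * F x)
      = (\<Sum>x\<in>S - \<Union>U. (distC d C x)^2 * F x) + (\<Sum>x\<in>\<Union>U. (distC d C x)^2 * F x)"
    using finite_S by (rule sum.subset_diff)
  also have "\<dots> \<le> pc * kpp_bound C U t + pu * (b * h + (u - 1 - t) / u * pu)"
  proof (rule add_mono)
    show "(\<Sum>x\<in>S - \<Union>U. (distC d C x)^2 * F x) \<le> pc * kpp_bound C U t"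
      unfolding pc_def cost_def sum_distrib_right
      using covered by (intro sum_mono mult_left_mono) auto
    show "(\<Sum>x\<in>\<Union>U. (distC d C x)^2 * F x) \<le> pu * (b * h + (u - 1 - t) / u * pu)"
      using uncovered_sum_le[OF U C t uncovered] unfolding b_def h_def u_def pu_def by simp
  qed
  also have "\<dots> \<le> (pc + pu) * (b * (h + 1 / (real t + 1)) + (u - 1 - t) / u * pu)"
    unfolding bound_t using t
    by (intro harmonic_step_le) (auto simp: pc_def pu_def b_def u_def cost_nonneg)
  also have "\<dots> = cost d C S * kpp_bound C U (Suc t)"
    unfolding bound_Suc pc_def pu_def using cost_split[OF U] by simp
  finally show ?thesis .
qed

theorem expectation_kpp_cost_le:
  assumes "opt_cluster_family U" "finite C" "C \<noteq> {}" "t \<le> card U"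
  shows "measure_pmf.expectation (kpp_pmf d S t C) (\<lambda>C'. cost d C' S) \<le> kpp_bound C U t"
  using assms
proof (induction t arbitrary: C U)
  case 0
  then show ?case
    using cost_le_kpp_bound_0 by simp
next
  case (Suc t)
  let ?F = "\<lambda>x. measure_pmf.expectation (kpp_pmf d S t (insert x C)) (\<lambda>C'. cost d C' S)"
  show ?case
  proof (cases "cost d C S = 0")
    case True
    then show ?thesis
      using kpp_bound_nonneg by simp
  next
    case False
    have "?F x \<le> kpp_bound C U t" if "x \<in> S - \<Union>U" for x
      using Suc.IH[of U "insert x C"] Suc.prems kpp_bound_insert_le[of C x U t] by simp
    moreover have "?F x \<le> kpp_bound (insert x C) (U - {A}) t" if "A \<in> U" "x \<in> A" for A x
      using Suc.IH[of "U - {A}" "insert x C"] Suc.prems that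
      by (simp add: opt_cluster_family_Diff opt_cluster_family_finite)
    ultimately have "(\<Sum>x\<in>S. (distC d C x)^2 * ?F x) \<le> cost d C S * kpp_bound C U (Suc t)"
      using Suc.prems by (intro kpp_step_sum_le) auto
    moreover have "0 < cost d C S"
      using False cost_nonneg[of d C S] by simp
    ultimately show ?thesis
      unfolding expectation_kpp_pmf_Suc[OF finite_S Suc.prems(2) False]
      by (simp add: pos_divide_le_eq mult.commute)
  qed
qed

end

theorem lemma4:
  fixes d :: "'a \<Rightarrow> 'a \<Rightarrow> real" and M :: real
    and S Copt C :: "'a set" and a :: "'a \<Rightarrow> 'a"
    and K u t :: nat and U :: "'a set set"
  assumes sym: "\<forall>x y. d x y = d y x"
    and nonneg: "\<forall>x y. 0 \<le> d x y"
    and approx_tri: "\<forall>x y z. d x z \<le> M * (d x y + d y z)"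
    and finS: "finite S"
    and finOpt: "finite Copt" and cardOpt: "card Copt = K" and neOpt: "Copt \<noteq> {}"
    and opt: "\<forall>C'. finite C' \<and> card C' = K \<longrightarrow> cost d Copt S \<le> cost d C' S"
    and assign: "\<forall>x\<in>S. a x \<in> Copt \<and> d x (a x) = distC d Copt x"
    and finC: "finite C" and neC: "C \<noteq> {}"
    and U_clusters: "U \<subseteq> clusters S Copt a"
    and U_uncovered: "\<forall>A\<in>U. A \<inter> C = {}"
    and cardU: "card U = u" and u_pos: "u > 0"
    and t_le: "t \<le> u"
  shows "measure_pmf.expectation (kpp_pmf d S t C) (\<lambda>C'. cost d C' S)
    \<le> (cost d C (S - \<Union>U) + 16 * M^4 * cost d Copt (\<Union>U)) * (1 + harm t)
       + (real (u - t) / real u) * cost d C (\<Union>U)"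
proof -
  interpret kmeanspp d M S Copt
  proof
    show "d x y = d y x" "0 \<le> d x y" "d x z \<le> M * (d x y + d y z)" for x y z
      using sym nonneg approx_tri by blast+
  qed (fact finS)
  have "opt_cluster_family U"
    using assign U_clusters by (intro opt_cluster_family_clusters) auto
  then show ?thesis
    using expectation_kpp_cost_le[OF _ finC neC, of U t] t_le unfolding kpp_bound_def cardU by simp
qed

end
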